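(* Let $S=\langle n_1,n_2\rangle$ be a numerical semigroup with $2\leq n_1<n_2$. Then $S$ is a MANS-semigroup if and only if there exists $a\in\mathbb{N}\setminus\{0\}$ such that $n_2=an_1+1$.
   Context: $\mathbb{N}=\{0,1,2,\ldots\}$. A numerical semigroup is a subset $S\subseteq\mathbb{N}$ closed under addition, containing $0$, with $\mathbb{N}\setminus S$ finite; $\langle A\rangle$ is the submonoid of $(\mathbb{N},+)$ generated by $A$. The multiplicity $\mathrm{m}(S)$ is the least element of $S\setminus\{0\}$. $S$ is a MANS-semigroup if $w(1)<w(2)<\cdots<w(\mathrm{m}(S)-1)$, where $w(i)$ is the least element of $S$ congruent to $i$ modulo $\mathrm{m}(S)$. *)

theory Defs
  imports Main
begin

inductive_set gen_monoid :: "nat set \<Rightarrow> nat set" for A :: "nat set" where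
  zero: "0 \<in> gen_monoid A"
| add: "a \<in> A \<Longrightarrow> x \<in> gen_monoid A \<Longrightarrow> a + x \<in> gen_monoid A"

definition numerical_semigroup :: "nat set \<Rightarrow> bool" where
  "numerical_semigroup S \<longleftrightarrow> 0 \<in> S \<and> (\<forall>x\<in>S. \<forall>y\<in>S. x + y \<in> S) \<and> finite (UNIV - S)"

definition multiplicity_ns :: "nat set \<Rightarrow> nat" where
  "multiplicity_ns S = (LEAST x. x \<in> S \<and> x \<noteq> 0)"

definition apery_w :: "nat set \<Rightarrow> nat \<Rightarrow> nat" where
  "apery_w S i = (LEAST x. x \<in> S \<and> x mod multiplicity_ns S = i mod multiplicity_ns S)"

definition MANS :: "nat set \<Rightarrow> bool" where
  "MANS S \<longleftrightarrow> (\<forall>i j. 1 \<le> i \<and> i < j \<and> j \<le> multiplicity_ns S - 1 \<longrightarrow> apery_w S i < apery_w S j)"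

end

theory Submission
  imports Defs
begin

text \<open>In \<open>\<langle>n\<^sub>1, n\<^sub>2\<rangle>\<close> the multiplicity is \<open>n\<^sub>1\<close>, and every Apery element \<open>w(i)\<close>
  needs a positive multiple of \<open>n\<^sub>2\<close> as soon as \<open>i\<close> is not divisible by \<open>n\<^sub>1\<close>; so \<open>w(1) \<ge> n\<^sub>2\<close>.
  On the other hand \<open>w(r) \<le> n\<^sub>2\<close> for \<open>r = n\<^sub>2 mod n\<^sub>1\<close>, so monotonicity of \<open>w\<close> forces \<open>r = 1\<close>.
  Conversely, if \<open>n\<^sub>2 \<equiv> 1 (mod n\<^sub>1)\<close> then \<open>b n\<^sub>2 \<equiv> b\<close>, whence \<open>w(i) = i n\<^sub>2\<close> for \<open>i < n\<^sub>1\<close>,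
  which is strictly increasing.\<close>

lemma gen_monoid_pair_iff: "x \<in> gen_monoid {p, q} \<longleftrightarrow> (\<exists>a b. x = a * p + b * q)"
proof
  assume "x \<in> gen_monoid {p, q}"
  then show "\<exists>a b. x = a * p + b * q"
  proof (induction rule: gen_monoid.induct)
    case zero
    show ?case by auto
  next
    case (add c y)
    then obtain a b where "y = a * p + b * q" by blast
    with add.hyps(1) have "c + y = Suc a * p + b * q \<or> c + y = a * p + Suc b * q" by auto
    then show ?case by blast
  qed
next
  have multiple_q: "b * q \<in> gen_monoid {p, q}" for b
    by (induction b) (auto intro: gen_monoid.intros)
  have "a * p + b * q \<in> gen_monoid {p, q}" for a b
    by (induction a) (auto intro: gen_monoid.intros multiple_q simp: add.assoc)
  then show "\<exists>a b. x = a * p + b * q \<Longrightarrow> x \<in> gen_monoid {p, q}" by blast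
qed

lemma multiplicity_ns_gen_monoid_pair:
  assumes "0 < n1" and "n1 \<le> n2"
  shows "multiplicity_ns (gen_monoid {n1, n2}) = n1"
  unfolding multiplicity_ns_def
proof (rule Least_equality)
  show "n1 \<in> gen_monoid {n1, n2} \<and> n1 \<noteq> 0"
    using assms(1) gen_monoid_pair_iff[of n1 n1 n2] by (metis add_0_right mult_1 mult_zero_left not_gr0)
next
  fix y assume "y \<in> gen_monoid {n1, n2} \<and> y \<noteq> 0"
  then obtain a b where "y = a * n1 + b * n2" "y \<noteq> 0"
    by (auto simp: gen_monoid_pair_iff)
  then consider "a \<noteq> 0" | "b \<noteq> 0" by auto
  then show "n1 \<le> y"
  proof cases
    case 1
    then show ?thesis using \<open>y = a * n1 + b * n2\<close> by (simp add: trans_le_add1)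
  next
    case 2
    then have "n1 \<le> b * n2" using assms(2) by (simp add: le_trans)
    then show ?thesis using \<open>y = a * n1 + b * n2\<close> by linarith
  qed
qed

lemma numerical_semigroup_contains_large:
  assumes "numerical_semigroup S"
  obtains N where "\<And>x. N \<le> x \<Longrightarrow> x \<in> S"
proof
  fix x assume "Suc (Max (UNIV - S)) \<le> x"
  moreover have "finite (UNIV - S)" using assms by (simp add: numerical_semigroup_def)
  ultimately show "x \<in> S" using Max_ge[of "UNIV - S" x] by (meson DiffI UNIV_I not_less_eq_eq)
qed

lemma multiplicity_ns_pos:
  assumes "numerical_semigroup S"
  shows "0 < multiplicity_ns S"
proof -
  obtain N where "\<And>x. N \<le> x \<Longrightarrow> x \<in> S"
    using numerical_semigroup_contains_large[OF assms] by blast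
  then have "\<exists>x. x \<in> S \<and> x \<noteq> 0" by (intro exI[of _ "N + 1"]) simp
  then show ?thesis unfolding multiplicity_ns_def by (metis (mono_tags, lifting) LeastI_ex gr0I)
qed

lemma apery_w_mem_mod:
  assumes "numerical_semigroup S"
  shows "apery_w S i \<in> S" and "apery_w S i mod multiplicity_ns S = i mod multiplicity_ns S"
proof -
  let ?m = "multiplicity_ns S"
  obtain N where large: "\<And>x. N \<le> x \<Longrightarrow> x \<in> S"
    using numerical_semigroup_contains_large[OF assms] by blast
  have "N \<le> N * ?m + i" using multiplicity_ns_pos[OF assms] by (simp add: trans_le_add1)
  then have "\<exists>x. x \<in> S \<and> x mod ?m = i mod ?m"
    using large by (intro exI[of _ "N * ?m + i"]) simp
  from LeastI_ex[OF this]
  show "apery_w S i \<in> S" "apery_w S i mod ?m = i mod ?m"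
    unfolding apery_w_def by simp_all
qed

lemma apery_w_le:
  "x \<in> S \<Longrightarrow> x mod multiplicity_ns S = i mod multiplicity_ns S \<Longrightarrow> apery_w S i \<le> x"
  unfolding apery_w_def by (rule Least_le) simp

lemma MANS_gen_monoid_pair_imp_mod_eq_1:
  assumes S: "numerical_semigroup (gen_monoid {n1, n2})"
    and "2 \<le> n1" and "n1 < n2"
    and mans: "MANS (gen_monoid {n1, n2})"
  shows "n2 mod n1 = 1"
proof -
  let ?S = "gen_monoid {n1, n2}"
  have m: "multiplicity_ns ?S = n1"
    using assms(2,3) by (simp add: multiplicity_ns_gen_monoid_pair)
  define r where "r = n2 mod n1"
  obtain a b where w1: "apery_w ?S 1 = a * n1 + b * n2"
    using apery_w_mem_mod(1)[OF S, of 1] by (auto simp: gen_monoid_pair_iff)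
  have w1_mod: "(a * n1 + b * n2) mod n1 = 1"
    using apery_w_mem_mod(2)[OF S, of 1] w1 m assms(2) by simp
  then have "b \<noteq> 0" by (rule contrapos_pn) simp
  then have w1_ge: "n2 \<le> apery_w ?S 1" using w1 by (simp add: trans_le_add2)
  have "r \<noteq> 0"
  proof
    assume "r = 0"
    then have "n1 dvd a * n1 + b * n2" unfolding r_def by auto
    then show False using w1_mod assms(2) by (simp add: dvd_eq_mod_eq_0)
  qed
  moreover have "\<not> 2 \<le> r"
  proof
    assume "2 \<le> r"
    moreover have "r < n1" using assms(2) unfolding r_def by simp
    ultimately have "apery_w ?S 1 < apery_w ?S r"
      using mans unfolding MANS_def m by auto
    moreover have "n2 \<in> ?S" by (metis gen_monoid_pair_iff mult_1 mult_zero_left add_0)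
    then have "apery_w ?S r \<le> n2" using apery_w_le m unfolding r_def by simp
    ultimately show False using w1_ge by simp
  qed
  ultimately show ?thesis unfolding r_def by simp
qed

lemma apery_w_gen_monoid_pair_mod_eq_1:
  assumes S: "numerical_semigroup (gen_monoid {n1, n2})"
    and "n1 \<le> n2" and "n2 mod n1 = 1" and "i < n1"
  shows "apery_w (gen_monoid {n1, n2}) i = i * n2"
proof (rule antisym)
  let ?S = "gen_monoid {n1, n2}"
  have m: "multiplicity_ns ?S = n1"
    using assms(2,4) by (simp add: multiplicity_ns_gen_monoid_pair)
  have multiple_mod: "(b * n2) mod n1 = b mod n1" for b
    using assms(3) by (metis mod_mult_right_eq mult.right_neutral)
  have "i * n2 \<in> ?S" by (metis gen_monoid_pair_iff add_0 mult_zero_left)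
  then show "apery_w ?S i \<le> i * n2"
    using apery_w_le[of "i * n2" ?S i] multiple_mod m by simp
  obtain a b where ab: "apery_w ?S i = a * n1 + b * n2"
    using apery_w_mem_mod(1)[OF S, of i] by (auto simp: gen_monoid_pair_iff)
  have "b mod n1 = i"
    using apery_w_mem_mod(2)[OF S, of i] ab m multiple_mod[of b] assms(4) by simp
  then have "i * n2 \<le> b * n2" by (metis mod_less_eq_dividend mult_le_mono1)
  then show "i * n2 \<le> apery_w ?S i" using ab by linarith
qed

lemma MANS_gen_monoid_pair_iff:
  assumes "numerical_semigroup (gen_monoid {n1, n2})"
    and "2 \<le> n1" and "n1 < n2"
  shows "MANS (gen_monoid {n1, n2}) \<longleftrightarrow> n2 mod n1 = 1"
proof
  show "MANS (gen_monoid {n1, n2}) \<Longrightarrow> n2 mod n1 = 1"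
    using MANS_gen_monoid_pair_imp_mod_eq_1 assms by blast
next
  assume "n2 mod n1 = 1"
  then have "apery_w (gen_monoid {n1, n2}) i = i * n2" if "i < n1" for i
    using apery_w_gen_monoid_pair_mod_eq_1 assms that by simp
  moreover have "multiplicity_ns (gen_monoid {n1, n2}) = n1"
    using assms(2,3) by (simp add: multiplicity_ns_gen_monoid_pair)
  ultimately show "MANS (gen_monoid {n1, n2})"
    unfolding MANS_def using assms(3) by auto
qed

theorem proposition2p3:
  fixes n1 n2 :: nat
  assumes "numerical_semigroup (gen_monoid {n1, n2})"
    and "2 \<le> n1" and "n1 < n2"
  shows "MANS (gen_monoid {n1, n2}) \<longleftrightarrow> (\<exists>a::nat. a \<noteq> 0 \<and> n2 = a * n1 + 1)"
proof -
  have "n2 mod n1 = 1 \<longleftrightarrow> (\<exists>a. a \<noteq> 0 \<and> n2 = a * n1 + 1)"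
  proof
    assume "n2 mod n1 = 1"
    moreover have "n2 div n1 \<noteq> 0" using assms(2,3) by (simp add: div_eq_0_iff)
    ultimately show "\<exists>a. a \<noteq> 0 \<and> n2 = a * n1 + 1" by (metis div_mult_mod_eq)
  next
    assume "\<exists>a. a \<noteq> 0 \<and> n2 = a * n1 + 1"
    then show "n2 mod n1 = 1" using assms(2) by (auto simp: mod_Suc)
  qed
  then show ?thesis using MANS_gen_monoid_pair_iff[OF assms] by simp
qed

end
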